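(* Let $H$ be a Hilbert space of dimension $N>1$, let $\mathcal F=\mathcal F(H)$ be the full Fock space, and let $v\in H$ with $\|v\|=1$. Then $$\mathbb{C}\Omega\oplus\sum_{w\in H\ominus\{v\}}\operatorname{Ran}(T_w)=N(T_v^* ),$$ where $H\ominus\{v\}=\{w\in H:\langle w,v\rangle=0\}$, $\operatorname{Ran}$ denotes range and $N(T_v^* )$ is the kernel of $T_v^*$.
   Context: $\mathcal F(H)=\mathbb{C}\Omega\oplus H\oplus(H\otimes H)\oplus\cdots$ (Hilbert direct sum, $\Omega$ a fixed unit vector). For $v\in H$, $T_v$ is the operator on $\mathcal F$ with $T_v\Omega=v$ and $T_v\xi=\xi\otimes v$ for $\xi\in H^{\otimes n}$, $n\ge1$. The sum on the left is the closed linear span of the indicated subspaces. *)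

theory Defs
  imports "HOL-Analysis.Analysis"
begin

text \<open>Concrete model: H = l2 over an index type 'i (an orthonormal basis of H indexed
by 'i, so dim H = cardinality of 'i). The full Fock space is l2 over words 'i list:
the word [] spans C Omega, words of length n span H tensor-power n, with
e_{i1} (x) ... (x) e_{in} corresponding to the word [i1,...,in].\<close>

definition l2_space :: "('a \<Rightarrow> complex) set" where
  "l2_space = {f. (\<lambda>x. (cmod (f x))^2) summable_on UNIV}"

definition l2_inner :: "('a \<Rightarrow> complex) \<Rightarrow> ('a \<Rightarrow> complex) \<Rightarrow> complex" where
  "l2_inner f g = (\<Sum>\<^sub>\<infinity>x. f x * cnj (g x))"

definition l2_norm :: "('a \<Rightarrow> complex) \<Rightarrow> real" where
  "l2_norm f = sqrt (\<Sum>\<^sub>\<infinity>x. (cmod (f x))^2)"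

definition fock_vac :: "'i list \<Rightarrow> complex" where
  "fock_vac xs = (if xs = [] then 1 else 0)"

text \<open>Right creation operator T_v: T_v Omega = v, T_v xi = xi (x) v.\<close>
definition creation :: "('i \<Rightarrow> complex) \<Rightarrow> ('i list \<Rightarrow> complex) \<Rightarrow> ('i list \<Rightarrow> complex)" where
  "creation v \<xi> xs = (if xs = [] then 0 else \<xi> (butlast xs) * v (last xs))"

definition l2_adjoint :: "(('a \<Rightarrow> complex) \<Rightarrow> ('a \<Rightarrow> complex)) \<Rightarrow> ('a \<Rightarrow> complex) \<Rightarrow> ('a \<Rightarrow> complex)" where
  "l2_adjoint T \<xi> = (THE \<zeta>. \<zeta> \<in> l2_space \<and> (\<forall>\<eta>\<in>l2_space. l2_inner (T \<eta>) \<xi> = l2_inner \<eta> \<zeta>))"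

definition cspan :: "('a \<Rightarrow> complex) set \<Rightarrow> ('a \<Rightarrow> complex) set" where
  "cspan S = {f. \<exists>A c. finite A \<and> A \<subseteq> S \<and> f = (\<lambda>x. \<Sum>s\<in>A. c s * s x)}"

definition l2_closure :: "('a \<Rightarrow> complex) set \<Rightarrow> ('a \<Rightarrow> complex) set" where
  "l2_closure S = {f \<in> l2_space. \<forall>e>0. \<exists>g\<in>S. l2_norm (\<lambda>x. f x - g x) < e}"

end

theory Submission
  imports Defs
begin

text \<open>In the word model, \<open>T\<^sub>v\<^sup>*\<close> contracts the last letter of a word against \<open>v\<close>:
\<open>(T\<^sub>v\<^sup>* \<xi>) ys = \<langle>\<xi> (ys @ [\<cdot>]), v\<rangle>\<close>. This operator is bounded, so its kernel is closed;
it contains \<open>\<Omega>\<close> and every \<open>T\<^sub>w \<eta>\<close> with \<open>w \<bottom> v\<close>, hence the whole closed span.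
Conversely, for \<open>\<xi>\<close> in the kernel, the part of \<open>\<xi>\<close> supported on the words with prefix \<open>y\<close>
is \<open>T\<^sub>w \<delta>\<^sub>y\<close> for \<open>w = \<xi> (y @ [\<cdot>])\<close>, and \<open>w \<bottom> v\<close> says exactly that \<open>T\<^sub>v\<^sup>* \<xi>\<close> vanishes at \<open>y\<close>.
Truncating \<open>\<xi>\<close> to its vacuum component and finitely many prefixes therefore gives elements
of the span, and these converge to \<open>\<xi>\<close>.\<close>

section \<open>Square-summable functions\<close>

lemma l2_spaceD: "f \<in> l2_space \<Longrightarrow> (\<lambda>x. (cmod (f x))\<^sup>2) summable_on UNIV"
  by (simp add: l2_space_def)

lemma l2_space_add:
  assumes "f \<in> l2_space" "g \<in> l2_space"
  shows "(\<lambda>x. f x + g x) \<in> l2_space"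
proof -
  have bound: "(cmod (f x + g x))\<^sup>2 \<le> 2 * (cmod (f x))\<^sup>2 + 2 * (cmod (g x))\<^sup>2" for x
  proof -
    have "(cmod (f x + g x))\<^sup>2 \<le> (cmod (f x) + cmod (g x))\<^sup>2"
      by (simp add: norm_triangle_ineq power_mono)
    also have "\<dots> \<le> 2 * (cmod (f x))\<^sup>2 + 2 * (cmod (g x))\<^sup>2"
      using sum_squares_bound[of "cmod (f x)" "cmod (g x)"] by (simp add: power2_sum)
    finally show ?thesis .
  qed
  have "(\<lambda>x. 2 * (cmod (f x))\<^sup>2 + 2 * (cmod (g x))\<^sup>2) summable_on UNIV"
    using assms by (intro summable_on_add summable_on_cmult_right l2_spaceD)
  then show ?thesis
    unfolding l2_space_def mem_Collect_eq by (rule summable_on_comparison_test) (simp_all add: bound)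
qed

lemma l2_space_cmult: "f \<in> l2_space \<Longrightarrow> (\<lambda>x. c * f x) \<in> l2_space"
  using summable_on_cmult_right[OF l2_spaceD, of f "(cmod c)\<^sup>2"]
  by (simp add: l2_space_def norm_mult power_mult_distrib)

lemma l2_space_diff: "f \<in> l2_space \<Longrightarrow> g \<in> l2_space \<Longrightarrow> (\<lambda>x. f x - g x) \<in> l2_space"
  using l2_space_add[of f "\<lambda>x. -1 * g x"] l2_space_cmult[of g "-1"] by simp

lemma l2_space_finite_support: "finite {x. f x \<noteq> 0} \<Longrightarrow> f \<in> l2_space"
proof -
  assume "finite {x. f x \<noteq> 0}"
  then have "(\<lambda>x. (cmod (f x))\<^sup>2) summable_on {x. f x \<noteq> 0}"
    by simp
  then show ?thesis
    unfolding l2_space_def by (subst (asm) summable_on_cong_neutral[where T = UNIV]) auto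
qed

lemma l2_space_reindex:
  assumes "f \<in> l2_space" "inj h"
  shows "f \<circ> h \<in> l2_space"
  using summable_on_subset_banach[OF l2_spaceD[OF assms(1)], of "range h"]
    summable_on_reindex[OF assms(2), of "\<lambda>x. (cmod (f x))\<^sup>2"]
  by (simp add: l2_space_def o_def)

lemma l2_norm_reindex_le:
  assumes "f \<in> l2_space" "inj h"
  shows "l2_norm (f \<circ> h) \<le> l2_norm f"
proof -
  have "(\<Sum>\<^sub>\<infinity>x. (cmod ((f \<circ> h) x))\<^sup>2) = (\<Sum>\<^sub>\<infinity>y\<in>range h. (cmod (f y))\<^sup>2)"
    using infsum_reindex[OF assms(2), of "\<lambda>y. (cmod (f y))\<^sup>2"] by (simp add: o_def)
  also have "\<dots> \<le> (\<Sum>\<^sub>\<infinity>y. (cmod (f y))\<^sup>2)"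
    using l2_spaceD[OF assms(1)] summable_on_subset_banach[OF l2_spaceD[OF assms(1)]]
    by (intro infsum_mono_neutral) auto
  finally show ?thesis
    unfolding l2_norm_def by (rule real_sqrt_le_mono)
qed

lemma l2_norm_nonneg: "0 \<le> l2_norm f"
  by (simp add: l2_norm_def infsum_nonneg)

lemma l2_norm_power2: "(l2_norm f)\<^sup>2 = (\<Sum>\<^sub>\<infinity>x. (cmod (f x))\<^sup>2)"
  by (simp add: l2_norm_def infsum_nonneg)

lemma l2_space_dominated:
  assumes "g \<in> l2_space" "\<And>x. cmod (f x) \<le> cmod (g x)"
  shows "f \<in> l2_space"
  unfolding l2_space_def mem_Collect_eq
  by (rule summable_on_comparison_test[OF l2_spaceD[OF assms(1)]]) (simp_all add: assms(2) power_mono)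

lemma l2_norm_mono:
  assumes "g \<in> l2_space" "\<And>x. cmod (f x) \<le> cmod (g x)"
  shows "l2_norm f \<le> l2_norm g"
proof -
  have "(\<Sum>\<^sub>\<infinity>x. (cmod (f x))\<^sup>2) \<le> (\<Sum>\<^sub>\<infinity>x. (cmod (g x))\<^sup>2)"
    using l2_spaceD[OF l2_space_dominated[OF assms]] l2_spaceD[OF assms(1)]
    by (rule infsum_mono) (simp add: assms(2) power_mono)
  then show ?thesis
    unfolding l2_norm_def by (rule real_sqrt_le_mono)
qed

lemma mult_le_sum_squares:
  fixes a b :: real
  assumes "0 \<le> a" "0 \<le> b"
  shows "a * b \<le> a\<^sup>2 + b\<^sup>2"
  using sum_squares_bound[of a b] mult_nonneg_nonneg[OF assms] by (simp add: mult.assoc)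

lemma abs_summable_l2_product:
  assumes "f \<in> l2_space" "g \<in> l2_space"
  shows "(\<lambda>x. cmod (f x) * cmod (g x)) summable_on UNIV"
proof (rule summable_on_comparison_test)
  show "(\<lambda>x. (cmod (f x))\<^sup>2 + (cmod (g x))\<^sup>2) summable_on UNIV"
    using assms by (intro summable_on_add l2_spaceD)
  show "cmod (f x) * cmod (g x) \<le> (cmod (f x))\<^sup>2 + (cmod (g x))\<^sup>2" for x
    by (simp add: mult_le_sum_squares)
qed simp

lemma l2_inner_summable:
  assumes "f \<in> l2_space" "g \<in> l2_space"
  shows "(\<lambda>x. f x * cnj (g x)) summable_on UNIV"
proof (rule abs_summable_summable)
  show "(\<lambda>x. norm (f x * cnj (g x))) summable_on UNIV"
    using abs_summable_l2_product[OF assms] by (simp add: norm_mult)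
qed

lemma L2_set_le_l2_norm:
  assumes "f \<in> l2_space" "finite F"
  shows "L2_set (\<lambda>x. cmod (f x)) F \<le> l2_norm f"
proof -
  have "(\<Sum>x\<in>F. (cmod (f x))\<^sup>2) = (\<Sum>\<^sub>\<infinity>x\<in>F. (cmod (f x))\<^sup>2)"
    using assms(2) by simp
  also have "\<dots> \<le> (\<Sum>\<^sub>\<infinity>x. (cmod (f x))\<^sup>2)"
    using assms(2) by (intro infsum_mono_neutral l2_spaceD[OF assms(1)]) auto
  finally show ?thesis
    unfolding L2_set_def l2_norm_def by (rule real_sqrt_le_mono)
qed

lemma l2_inner_Cauchy_Schwarz:
  assumes "f \<in> l2_space" "g \<in> l2_space"
  shows "cmod (l2_inner f g) \<le> l2_norm f * l2_norm g"
proof -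
  have "cmod (l2_inner f g) \<le> (\<Sum>\<^sub>\<infinity>x. norm (f x * cnj (g x)))"
    unfolding l2_inner_def
    by (rule norm_infsum_bound) (simp add: norm_mult abs_summable_l2_product[OF assms])
  also have "\<dots> = (\<Sum>\<^sub>\<infinity>x. cmod (f x) * cmod (g x))"
    by (simp add: norm_mult)
  also have "\<dots> \<le> l2_norm f * l2_norm g"
  proof (rule infsum_le_finite_sums[OF abs_summable_l2_product[OF assms]])
    fix F :: "'a set" assume "finite F"
    have "(\<Sum>x\<in>F. cmod (f x) * cmod (g x))
        \<le> L2_set (\<lambda>x. cmod (f x)) F * L2_set (\<lambda>x. cmod (g x)) F"
      using L2_set_mult_ineq[where f = "\<lambda>x. cmod (f x)" and g = "\<lambda>x. cmod (g x)" and A = F] by simp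
    also have "\<dots> \<le> l2_norm f * l2_norm g"
      using \<open>finite F\<close> assms by (intro mult_mono L2_set_le_l2_norm l2_norm_nonneg) auto
    finally show "(\<Sum>x\<in>F. cmod (f x) * cmod (g x)) \<le> l2_norm f * l2_norm g" .
  qed
  finally show ?thesis .
qed

lemma l2_inner_delta: "l2_inner (\<lambda>x. if x = y then 1 else 0) g = cnj (g y)"
proof -
  have "l2_inner (\<lambda>x. if x = y then 1 else 0) g = (\<Sum>\<^sub>\<infinity>x\<in>{y}. cnj (g x))"
    unfolding l2_inner_def by (rule infsum_cong_neutral) auto
  then show ?thesis by simp
qed

lemma l2_space_delta: "(\<lambda>x. if x = y then 1 else 0) \<in> l2_space"
  by (rule l2_space_finite_support) simp

lemma l2_tail_small:
  assumes "f \<in> l2_space" "e > 0"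
  obtains G where "finite G" "l2_norm (\<lambda>x. if x \<in> G then 0 else f x) < e"
proof -
  let ?Q = "\<lambda>x. (cmod (f x))\<^sup>2"
  have Q: "?Q summable_on UNIV"
    using assms(1) by (rule l2_spaceD)
  obtain G where G: "finite G" "dist (sum ?Q G) (\<Sum>\<^sub>\<infinity>x. ?Q x) \<le> e\<^sup>2 / 2"
    using infsum_finite_approximation[OF Q, of "e\<^sup>2 / 2"] assms(2) by auto
  have tail: "(l2_norm (\<lambda>x. if x \<in> G then 0 else f x))\<^sup>2 = (\<Sum>\<^sub>\<infinity>x\<in>-G. ?Q x)"
    unfolding l2_norm_power2 by (rule infsum_cong_neutral) auto
  have "(\<Sum>\<^sub>\<infinity>x. ?Q x) = (\<Sum>\<^sub>\<infinity>x\<in>G \<union> -G. ?Q x)"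
    by simp
  also have "\<dots> = sum ?Q G + (\<Sum>\<^sub>\<infinity>x\<in>-G. ?Q x)"
    using G(1) summable_on_subset_banach[OF Q] by (subst infsum_Un_disjoint) auto
  finally have "(\<Sum>\<^sub>\<infinity>x\<in>-G. ?Q x) = dist (sum ?Q G) (\<Sum>\<^sub>\<infinity>x. ?Q x)"
    using infsum_nonneg[of "-G" ?Q] by (simp add: dist_real_def)
  also have "\<dots> \<le> e\<^sup>2 / 2"
    by (rule G(2))
  also have "\<dots> < e\<^sup>2"
    using assms(2) by simp
  finally have "(l2_norm (\<lambda>x. if x \<in> G then 0 else f x))\<^sup>2 < e\<^sup>2"
    unfolding tail .
  then have "l2_norm (\<lambda>x. if x \<in> G then 0 else f x) < e"
    using assms(2) l2_norm_nonneg by (simp add: power_less_imp_less_base)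
  with G(1) show ?thesis
    by (rule that)
qed

section \<open>Reindexing nonempty words by their last letter\<close>

lemma inj_snoc: "inj (\<lambda>(ys, i). ys @ [i])"
  by (auto simp: inj_def)

lemma range_snoc: "range (\<lambda>(ys, i). ys @ [i]) = {xs. xs \<noteq> []}"
proof -
  have "xs \<in> range (\<lambda>(ys, i). ys @ [i])" if "xs \<noteq> []" for xs :: "'a list"
    using that by (intro image_eqI[of _ _ "(butlast xs, last xs)"]) auto
  moreover have "range (\<lambda>(ys, i). ys @ [i]) \<subseteq> {xs. xs \<noteq> []}"
    by auto
  ultimately show ?thesis
    by blast
qed

lemma has_sum_snoc_iff:
  "((\<lambda>(ys, i). G (ys @ [i])) has_sum s) UNIV \<longleftrightarrow> (G has_sum s) {xs. xs \<noteq> []}"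
  using has_sum_reindex[OF inj_snoc, of G s] unfolding range_snoc by (simp add: comp_def case_prod_unfold)

lemma summable_on_snoc_iff:
  "(\<lambda>(ys, i). G (ys @ [i])) summable_on UNIV \<longleftrightarrow> G summable_on {xs. xs \<noteq> []}"
  by (simp add: summable_on_def has_sum_snoc_iff)

lemma infsum_snoc: "(\<Sum>\<^sub>\<infinity>(ys, i). G (ys @ [i])) = (\<Sum>\<^sub>\<infinity>xs\<in>{xs. xs \<noteq> []}. G xs)"
  using infsum_reindex[OF inj_snoc, of G] unfolding range_snoc by (simp add: comp_def case_prod_unfold)

lemma summable_on_mult_nonneg:
  fixes f :: "'a \<Rightarrow> real" and g :: "'b \<Rightarrow> real"
  assumes "f summable_on UNIV" "g summable_on UNIV" "\<And>x. 0 \<le> f x" "\<And>y. 0 \<le> g y"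
  shows "(\<lambda>(x, y). f x * g y) summable_on UNIV"
proof -
  have "(\<lambda>(x, y). f x * g y) summable_on Sigma UNIV (\<lambda>_. UNIV)"
  proof (rule summable_on_SigmaI[where g = "\<lambda>x. f x * (\<Sum>\<^sub>\<infinity>y. g y)"])
    show "((\<lambda>y. case (x, y) of (x, y) \<Rightarrow> f x * g y) has_sum f x * (\<Sum>\<^sub>\<infinity>y. g y)) UNIV" for x
      using has_sum_cmult_right[OF has_sum_infsum[OF assms(2)], of "f x"] by simp
    show "(\<lambda>x. f x * (\<Sum>\<^sub>\<infinity>y. g y)) summable_on UNIV"
      using assms(1) by (rule summable_on_cmult_left)
  qed (simp add: assms)
  then show ?thesis by simp
qed

lemma l2_snoc_summable:
  "\<xi> \<in> l2_space \<Longrightarrow> (\<lambda>(ys, i). (cmod (\<xi> (ys @ [i])))\<^sup>2) summable_on UNIV"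
  unfolding summable_on_snoc_iff[of "\<lambda>xs. (cmod (\<xi> xs))\<^sup>2"] by (rule summable_on_subset_banach[OF l2_spaceD]) auto

lemma l2_space_row: "\<xi> \<in> l2_space \<Longrightarrow> (\<lambda>i. \<xi> (ys @ [i])) \<in> l2_space"
  using l2_space_reindex[of \<xi> "\<lambda>i. ys @ [i]"] by (simp add: inj_def comp_def)

lemma l2_norm_row_le: "\<xi> \<in> l2_space \<Longrightarrow> l2_norm (\<lambda>i. \<xi> (ys @ [i])) \<le> l2_norm \<xi>"
  using l2_norm_reindex_le[of \<xi> "\<lambda>i. ys @ [i]"] by (simp add: inj_def comp_def)

lemma l2_space_creation:
  assumes "w \<in> l2_space" "\<xi> \<in> l2_space"
  shows "creation w \<xi> \<in> l2_space"
proof -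
  have "(\<lambda>(ys, i). (cmod (\<xi> ys))\<^sup>2 * (cmod (w i))\<^sup>2) summable_on UNIV"
    using assms by (intro summable_on_mult_nonneg l2_spaceD) auto
  then have "(\<lambda>xs. (cmod (creation w \<xi> xs))\<^sup>2) summable_on {xs. xs \<noteq> []}"
    unfolding summable_on_snoc_iff[symmetric]
    by (simp add: creation_def norm_mult power_mult_distrib)
  then show ?thesis
    unfolding l2_space_def
    by (subst (asm) summable_on_cong_neutral[where T = UNIV]) (auto simp: creation_def)
qed

section \<open>The adjoint of the creation operator\<close>

definition annihilation :: "('i \<Rightarrow> complex) \<Rightarrow> ('i list \<Rightarrow> complex) \<Rightarrow> 'i list \<Rightarrow> complex" where
  "annihilation v \<xi> ys = l2_inner (\<lambda>i. \<xi> (ys @ [i])) v"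

lemma norm_annihilation_le_row:
  assumes "v \<in> l2_space" "\<xi> \<in> l2_space"
  shows "cmod (annihilation v \<xi> ys) \<le> l2_norm v * l2_norm (\<lambda>i. \<xi> (ys @ [i]))"
  using l2_inner_Cauchy_Schwarz[OF l2_space_row[OF assms(2)] assms(1)]
  by (simp add: annihilation_def mult.commute)

lemma norm_annihilation_le:
  assumes "v \<in> l2_space" "\<xi> \<in> l2_space"
  shows "cmod (annihilation v \<xi> ys) \<le> l2_norm v * l2_norm \<xi>"
  using norm_annihilation_le_row[OF assms] l2_norm_row_le[OF assms(2)]
  by (meson l2_norm_nonneg mult_left_mono order_trans)

lemma l2_space_annihilation:
  assumes "v \<in> l2_space" "\<xi> \<in> l2_space"
  shows "annihilation v \<xi> \<in> l2_space"
proof -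
  have "(\<lambda>ys. \<Sum>\<^sub>\<infinity>i. (cmod (\<xi> (ys @ [i])))\<^sup>2) summable_on UNIV"
    using summable_on_SigmaD[of "\<lambda>(ys, i). (cmod (\<xi> (ys @ [i])))\<^sup>2" UNIV "\<lambda>_. UNIV"]
      l2_snoc_summable[OF assms(2)] l2_spaceD[OF l2_space_row[OF assms(2)]]
    by simp
  then have rows: "(\<lambda>ys. (l2_norm v)\<^sup>2 * (l2_norm (\<lambda>i. \<xi> (ys @ [i])))\<^sup>2) summable_on UNIV"
    by (simp add: l2_norm_power2 summable_on_cmult_right)
  have bound: "(cmod (annihilation v \<xi> ys))\<^sup>2 \<le> (l2_norm v)\<^sup>2 * (l2_norm (\<lambda>i. \<xi> (ys @ [i])))\<^sup>2" for ys
    using power_mono[OF norm_annihilation_le_row[OF assms] norm_ge_zero]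
    by (simp add: power_mult_distrib)
  show ?thesis
    unfolding l2_space_def mem_Collect_eq
    by (rule summable_on_comparison_test[OF rows]) (simp_all add: bound)
qed

lemma l2_inner_creation:
  assumes v: "v \<in> l2_space" and \<eta>: "\<eta> \<in> l2_space" and \<xi>: "\<xi> \<in> l2_space"
  shows "l2_inner (creation v \<eta>) \<xi> = l2_inner \<eta> (annihilation v \<xi>)"
proof -
  define H where "H = (\<lambda>(ys, i). \<eta> ys * v i * cnj (\<xi> (ys @ [i])))"
  have "(\<lambda>p. norm (H p)) summable_on UNIV"
  proof (rule summable_on_comparison_test)
    show "(\<lambda>(ys, i). (cmod (\<eta> ys))\<^sup>2 * (cmod (v i))\<^sup>2 + (cmod (\<xi> (ys @ [i])))\<^sup>2) summable_on UNIV"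
      using summable_on_add[OF summable_on_mult_nonneg[OF l2_spaceD[OF \<eta>] l2_spaceD[OF v]]
          l2_snoc_summable[OF \<xi>]]
      by (simp add: case_prod_unfold)
    show "norm (H p) \<le> (case p of (ys, i) \<Rightarrow> (cmod (\<eta> ys))\<^sup>2 * (cmod (v i))\<^sup>2 + (cmod (\<xi> (ys @ [i])))\<^sup>2)" for p
      using mult_le_sum_squares[of "cmod (\<eta> (fst p)) * cmod (v (snd p))" "cmod (\<xi> (fst p @ [snd p]))"]
      by (simp add: H_def case_prod_unfold norm_mult power_mult_distrib)
  qed simp
  then have H_summable: "H summable_on Sigma UNIV (\<lambda>_. UNIV)"
    by (simp add: abs_summable_summable)
  have row: "(\<Sum>\<^sub>\<infinity>i. H (ys, i)) = \<eta> ys * cnj (annihilation v \<xi> ys)" for ys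
  proof -
    have "(\<Sum>\<^sub>\<infinity>i. H (ys, i)) = \<eta> ys * (\<Sum>\<^sub>\<infinity>i. v i * cnj (\<xi> (ys @ [i])))"
      using l2_inner_summable[OF v l2_space_row[OF \<xi>]]
      by (simp add: H_def mult.assoc infsum_cmult_right)
    then show ?thesis
      by (simp add: annihilation_def l2_inner_def mult.commute flip: infsum_cnj)
  qed
  have "l2_inner (creation v \<eta>) \<xi> = (\<Sum>\<^sub>\<infinity>xs\<in>{xs. xs \<noteq> []}. creation v \<eta> xs * cnj (\<xi> xs))"
    unfolding l2_inner_def by (rule infsum_cong_neutral) (auto simp: creation_def)
  also have "\<dots> = (\<Sum>\<^sub>\<infinity>p. H p)"
    by (simp add: infsum_snoc[symmetric] H_def creation_def case_prod_unfold)
  also have "\<dots> = (\<Sum>\<^sub>\<infinity>ys. \<Sum>\<^sub>\<infinity>i. H (ys, i))"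
    using infsum_Sigma_banach[OF H_summable] by simp
  also have "\<dots> = l2_inner \<eta> (annihilation v \<xi>)"
    by (simp add: row l2_inner_def)
  finally show ?thesis .
qed

lemma l2_adjoint_creation:
  assumes v: "v \<in> l2_space" and \<xi>: "\<xi> \<in> l2_space"
  shows "l2_adjoint (creation v) \<xi> = annihilation v \<xi>"
  unfolding l2_adjoint_def
proof (rule the_equality)
  show "annihilation v \<xi> \<in> l2_space \<and>
      (\<forall>\<eta>\<in>l2_space. l2_inner (creation v \<eta>) \<xi> = l2_inner \<eta> (annihilation v \<xi>))"
    using l2_space_annihilation[OF v \<xi>] l2_inner_creation[OF v _ \<xi>] by blast
next
  fix \<zeta> assume \<zeta>: "\<zeta> \<in> l2_space \<and> (\<forall>\<eta>\<in>l2_space. l2_inner (creation v \<eta>) \<xi> = l2_inner \<eta> \<zeta>)"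
  show "\<zeta> = annihilation v \<xi>"
  proof
    fix y :: "'a list"
    let ?\<delta> = "\<lambda>xs. if xs = y then 1 else 0"
    have "cnj (\<zeta> y) = l2_inner ?\<delta> \<zeta>"
      by (simp add: l2_inner_delta)
    also have "\<dots> = l2_inner (creation v ?\<delta>) \<xi>"
      using \<zeta> l2_space_delta by metis
    also have "\<dots> = cnj (annihilation v \<xi> y)"
      by (simp add: l2_inner_creation[OF v l2_space_delta \<xi>] l2_inner_delta)
    finally show "\<zeta> y = annihilation v \<xi> y" by simp
  qed
qed

lemma annihilation_add:
  assumes "v \<in> l2_space" "f \<in> l2_space" "g \<in> l2_space"
  shows "annihilation v (\<lambda>x. f x + g x) ys = annihilation v f ys + annihilation v g ys"
  using l2_inner_summable[OF l2_space_row[OF assms(2)] assms(1)]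
    l2_inner_summable[OF l2_space_row[OF assms(3)] assms(1)]
  by (simp add: annihilation_def l2_inner_def distrib_right infsum_add)

lemma annihilation_cmult:
  assumes "v \<in> l2_space" "f \<in> l2_space"
  shows "annihilation v (\<lambda>x. c * f x) ys = c * annihilation v f ys"
  using l2_inner_summable[OF l2_space_row[OF assms(2)] assms(1)]
  by (simp add: annihilation_def l2_inner_def mult.assoc infsum_cmult_right)

lemma annihilation_diff:
  assumes "v \<in> l2_space" "f \<in> l2_space" "g \<in> l2_space"
  shows "annihilation v (\<lambda>x. f x - g x) ys = annihilation v f ys - annihilation v g ys"
  using annihilation_add[OF assms(1,2) l2_space_cmult[OF assms(3)], of "-1"]
    annihilation_cmult[OF assms(1,3), of "-1"]
  by simp

section \<open>Finite linear spans\<close>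

lemma cspan_cmult_mem: "s \<in> S \<Longrightarrow> (\<lambda>x. c * s x) \<in> cspan S"
  unfolding cspan_def by (intro CollectI exI[of _ "{s}"] exI[of _ "\<lambda>_. c"]) simp

lemma cspan_superset: "S \<subseteq> cspan S"
  using cspan_cmult_mem[of _ S 1] by auto

lemma cspan_add:
  assumes "f \<in> cspan S" "g \<in> cspan S"
  shows "(\<lambda>x. f x + g x) \<in> cspan S"
proof -
  obtain A a where A: "finite A" "A \<subseteq> S" "f = (\<lambda>x. \<Sum>s\<in>A. a s * s x)"
    using assms(1) unfolding cspan_def by blast
  obtain B b where B: "finite B" "B \<subseteq> S" "g = (\<lambda>x. \<Sum>s\<in>B. b s * s x)"
    using assms(2) unfolding cspan_def by blast
  define c where "c s = (if s \<in> A then a s else 0) + (if s \<in> B then b s else 0)" for s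
  have "(\<Sum>s\<in>A \<union> B. c s * s x) = (\<Sum>s\<in>A. a s * s x) + (\<Sum>s\<in>B. b s * s x)" for x
  proof -
    have "c s * s x = (if s \<in> A then a s * s x else 0) + (if s \<in> B then b s * s x else 0)" for s
      by (simp add: c_def distrib_right)
    then have "(\<Sum>s\<in>A \<union> B. c s * s x)
        = (\<Sum>s\<in>A \<union> B. if s \<in> A then a s * s x else 0) + (\<Sum>s\<in>A \<union> B. if s \<in> B then b s * s x else 0)"
      by (simp add: sum.distrib)
    also have "\<dots> = (\<Sum>s\<in>A. a s * s x) + (\<Sum>s\<in>B. b s * s x)"
      using A(1) B(1)
      by (simp add: sum.mono_neutral_right[of "A \<union> B" A] sum.mono_neutral_right[of "A \<union> B" B])
    finally show ?thesis .
  qed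
  then have "(\<lambda>x. f x + g x) = (\<lambda>x. \<Sum>s\<in>A \<union> B. c s * s x)"
    using A(3) B(3) by simp
  then show ?thesis
    unfolding cspan_def using A B by blast
qed

lemma cspan_subset:
  assumes "S \<subseteq> K" "(\<lambda>_. 0) \<in> K"
    and "\<And>f g. f \<in> K \<Longrightarrow> g \<in> K \<Longrightarrow> (\<lambda>x. f x + g x) \<in> K"
    and "\<And>c f. f \<in> K \<Longrightarrow> (\<lambda>x. c * f x) \<in> K"
  shows "cspan S \<subseteq> K"
proof
  fix f assume "f \<in> cspan S"
  then obtain A c where A: "finite A" "A \<subseteq> S" "f = (\<lambda>x. \<Sum>s\<in>A. c s * s x)"
    unfolding cspan_def by blast
  have "(\<lambda>x. \<Sum>s\<in>A. c s * s x) \<in> K"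
    using A(1,2)
  proof (induction A rule: finite_induct)
    case (insert s A)
    then have "(\<lambda>x. c s * s x) \<in> K" "(\<lambda>x. \<Sum>s\<in>A. c s * s x) \<in> K"
      using assms(1,4) by auto
    then show ?case
      using insert.hyps by (simp add: assms(3))
  qed (simp add: assms(2))
  then show "f \<in> K"
    using A(3) by simp
qed

lemma l2_closure_mono: "S \<subseteq> T \<Longrightarrow> l2_closure S \<subseteq> l2_closure T"
  unfolding l2_closure_def by blast

section \<open>The kernel of the adjoint as a closed span\<close>

definition annihilation_kernel :: "('i \<Rightarrow> complex) \<Rightarrow> ('i list \<Rightarrow> complex) set" where
  "annihilation_kernel v = {\<xi> \<in> l2_space. annihilation v \<xi> = (\<lambda>_. 0)}"

lemma l2_closure_annihilation_kernel:
  assumes v: "v \<in> l2_space"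
  shows "l2_closure (annihilation_kernel v) \<subseteq> annihilation_kernel v"
proof
  fix f assume f: "f \<in> l2_closure (annihilation_kernel v)"
  then have f_l2: "f \<in> l2_space"
    by (simp add: l2_closure_def)
  have "annihilation v f ys = 0" for ys
  proof (rule ccontr)
    assume "annihilation v f ys \<noteq> 0"
    \<comment> \<open>dividing by \<open>\<parallel>v\<parallel> + 1\<close> rather than \<open>\<parallel>v\<parallel>\<close> also covers \<open>v = 0\<close>\<close>
    then have "cmod (annihilation v f ys) / (l2_norm v + 1) > 0"
      using l2_norm_nonneg[of v] by (simp add: add_nonneg_pos)
    then obtain g where g: "g \<in> annihilation_kernel v"
      and close: "l2_norm (\<lambda>x. f x - g x) < cmod (annihilation v f ys) / (l2_norm v + 1)"
      using f unfolding l2_closure_def by blast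
    have g_l2: "g \<in> l2_space" and "annihilation v g ys = 0"
      using g by (auto simp: annihilation_kernel_def)
    then have "cmod (annihilation v f ys) = cmod (annihilation v (\<lambda>x. f x - g x) ys)"
      by (simp add: annihilation_diff[OF v f_l2 g_l2])
    also have "\<dots> \<le> l2_norm v * l2_norm (\<lambda>x. f x - g x)"
      by (rule norm_annihilation_le[OF v l2_space_diff[OF f_l2 g_l2]])
    also have "\<dots> \<le> (l2_norm v + 1) * l2_norm (\<lambda>x. f x - g x)"
      by (simp add: mult_right_mono l2_norm_nonneg)
    also have "\<dots> < cmod (annihilation v f ys)"
      using close l2_norm_nonneg[of v] by (simp add: field_simps add_nonneg_pos)
    finally show False by simp
  qed
  then show "f \<in> annihilation_kernel v"
    using f_l2 by (auto simp: annihilation_kernel_def)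
qed

definition fock_generators :: "('i \<Rightarrow> complex) \<Rightarrow> ('i list \<Rightarrow> complex) set" where
  "fock_generators v =
    {fock_vac} \<union> (\<Union>w\<in>{w \<in> l2_space. l2_inner w v = 0}. creation w ` l2_space)"

lemma fock_vac_mem_annihilation_kernel: "fock_vac \<in> annihilation_kernel v"
proof -
  have "fock_vac \<in> l2_space"
    by (rule l2_space_finite_support) (simp add: fock_vac_def)
  moreover have "annihilation v fock_vac = (\<lambda>_. 0)"
    by (simp add: fun_eq_iff annihilation_def l2_inner_def fock_vac_def)
  ultimately show ?thesis
    by (simp add: annihilation_kernel_def)
qed

lemma creation_mem_annihilation_kernel:
  assumes v: "v \<in> l2_space" and w: "w \<in> l2_space" "l2_inner w v = 0" and \<eta>: "\<eta> \<in> l2_space"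
  shows "creation w \<eta> \<in> annihilation_kernel v"
proof -
  have "annihilation v (creation w \<eta>) ys = \<eta> ys * l2_inner w v" for ys
    using l2_inner_summable[OF w(1) v]
    by (simp add: annihilation_def l2_inner_def creation_def mult.assoc infsum_cmult_right)
  then show ?thesis
    using l2_space_creation[OF w(1) \<eta>] w(2) by (simp add: annihilation_kernel_def fun_eq_iff)
qed

lemma cspan_fock_generators_subset:
  assumes "v \<in> l2_space"
  shows "cspan (fock_generators v) \<subseteq> annihilation_kernel v"
proof (rule cspan_subset)
  show "fock_generators v \<subseteq> annihilation_kernel v"
    using fock_vac_mem_annihilation_kernel creation_mem_annihilation_kernel[OF assms]
    by (auto simp: fock_generators_def)
  show "(\<lambda>_. 0) \<in> annihilation_kernel v"
    by (simp add: annihilation_kernel_def fun_eq_iff annihilation_def l2_inner_def l2_space_finite_support)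
  show "(\<lambda>x. f x + g x) \<in> annihilation_kernel v"
    if "f \<in> annihilation_kernel v" "g \<in> annihilation_kernel v" for f g
    using that by (simp add: annihilation_kernel_def fun_eq_iff annihilation_add[OF assms] l2_space_add)
  show "(\<lambda>x. c * f x) \<in> annihilation_kernel v" if "f \<in> annihilation_kernel v" for c f
    using that by (simp add: annihilation_kernel_def fun_eq_iff annihilation_cmult[OF assms] l2_space_cmult)
qed

lemma creation_row_delta:
  "creation (\<lambda>i. \<xi> (y @ [i])) (\<lambda>xs. if xs = y then 1 else 0) =
    (\<lambda>xs. if xs \<noteq> [] \<and> butlast xs = y then \<xi> xs else 0)"
proof
  show "creation (\<lambda>i. \<xi> (y @ [i])) (\<lambda>xs. if xs = y then 1 else 0) xs =
      (if xs \<noteq> [] \<and> butlast xs = y then \<xi> xs else 0)" for xs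
    by (cases xs rule: rev_cases) (simp_all add: creation_def)
qed

lemma truncation_mem_cspan_fock_generators:
  assumes \<xi>: "\<xi> \<in> annihilation_kernel v" and F: "finite F"
  shows "(\<lambda>xs. if xs = [] \<or> butlast xs \<in> F then \<xi> xs else 0) \<in> cspan (fock_generators v)"
  using F
proof (induction F rule: finite_induct)
  case empty
  have "(\<lambda>xs. \<xi> [] * fock_vac xs) \<in> cspan (fock_generators v)"
    by (rule cspan_cmult_mem) (simp add: fock_generators_def)
  moreover have "(\<lambda>xs. \<xi> [] * fock_vac xs) = (\<lambda>xs. if xs = [] \<or> butlast xs \<in> {} then \<xi> xs else 0)"
    by (simp add: fun_eq_iff fock_vac_def)
  ultimately show ?case
    by simp
next
  case (insert y F)
  have "\<xi> \<in> l2_space" "annihilation v \<xi> y = 0"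
    using \<xi> by (auto simp: annihilation_kernel_def)
  then have row: "(\<lambda>i. \<xi> (y @ [i])) \<in> {w \<in> l2_space. l2_inner w v = 0}"
    by (simp add: l2_space_row annihilation_def)
  have "creation (\<lambda>i. \<xi> (y @ [i])) (\<lambda>xs. if xs = y then 1 else 0)
      \<in> creation (\<lambda>i. \<xi> (y @ [i])) ` l2_space"
    using l2_space_delta by (rule imageI)
  then have "creation (\<lambda>i. \<xi> (y @ [i])) (\<lambda>xs. if xs = y then 1 else 0) \<in> fock_generators v"
    unfolding fock_generators_def by (rule UnI2[OF UN_I[OF row]])
  then have "(\<lambda>xs. if xs \<noteq> [] \<and> butlast xs = y then \<xi> xs else 0) \<in> cspan (fock_generators v)"
    unfolding creation_row_delta by (rule subsetD[OF cspan_superset])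
  then have "(\<lambda>xs. (if xs = [] \<or> butlast xs \<in> F then \<xi> xs else 0)
      + (if xs \<noteq> [] \<and> butlast xs = y then \<xi> xs else 0)) \<in> cspan (fock_generators v)"
    by (rule cspan_add[OF insert.IH])
  moreover have "(\<lambda>xs. (if xs = [] \<or> butlast xs \<in> F then \<xi> xs else 0)
      + (if xs \<noteq> [] \<and> butlast xs = y then \<xi> xs else 0))
    = (\<lambda>xs. if xs = [] \<or> butlast xs \<in> insert y F then \<xi> xs else 0)"
    using insert.hyps(2) by (auto simp: fun_eq_iff)
  ultimately show ?case
    by simp
qed

lemma annihilation_kernel_subset_l2_closure:
  "annihilation_kernel v \<subseteq> l2_closure (cspan (fock_generators v))"
proof
  fix \<xi> assume \<xi>: "\<xi> \<in> annihilation_kernel v"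
  then have \<xi>_l2: "\<xi> \<in> l2_space"
    by (simp add: annihilation_kernel_def)
  have "\<exists>g\<in>cspan (fock_generators v). l2_norm (\<lambda>x. \<xi> x - g x) < e" if "e > 0" for e
  proof -
    obtain G where G: "finite G" "l2_norm (\<lambda>x. if x \<in> G then 0 else \<xi> x) < e"
      using l2_tail_small[OF \<xi>_l2 \<open>e > 0\<close>] by blast
    define g where "g = (\<lambda>xs. if xs = [] \<or> butlast xs \<in> butlast ` G then \<xi> xs else 0)"
    have "g \<in> cspan (fock_generators v)"
      unfolding g_def using \<xi> G(1) by (simp add: truncation_mem_cspan_fock_generators)
    moreover have "cmod (\<xi> x - g x) \<le> cmod (if x \<in> G then 0 else \<xi> x)" for x
    proof (cases "x \<in> G")
      case True
      then have "g x = \<xi> x"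
        by (auto simp: g_def)
      then show ?thesis
        by simp
    qed (simp add: g_def)
    then have "l2_norm (\<lambda>x. \<xi> x - g x) \<le> l2_norm (\<lambda>x. if x \<in> G then 0 else \<xi> x)"
      using l2_space_dominated[OF \<xi>_l2, of "\<lambda>x. if x \<in> G then 0 else \<xi> x"]
      by (intro l2_norm_mono) simp_all
    ultimately show ?thesis
      using G(2) by (meson order.strict_trans1)
  qed
  then show "\<xi> \<in> l2_closure (cspan (fock_generators v))"
    using \<xi>_l2 by (simp add: l2_closure_def)
qed

theorem l2_closure_cspan_fock_generators:
  assumes "v \<in> l2_space"
  shows "l2_closure (cspan (fock_generators v)) = annihilation_kernel v"
  using l2_closure_mono[OF cspan_fock_generators_subset[OF assms]]
    l2_closure_annihilation_kernel[OF assms] annihilation_kernel_subset_l2_closure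
  by blast

lemma annihilation_kernel_eq_adjoint_kernel:
  assumes "v \<in> l2_space"
  shows "annihilation_kernel v = {\<xi> \<in> l2_space. l2_adjoint (creation v) \<xi> = (\<lambda>_. 0)}"
  using l2_adjoint_creation[OF assms] by (auto simp: annihilation_kernel_def)

theorem corollary3p13:
  fixes v :: "'i \<Rightarrow> complex"
  assumes "\<exists>a b :: 'i. a \<noteq> b"
    and "v \<in> l2_space" and "l2_norm v = 1"
  shows "l2_closure (cspan ({fock_vac} \<union>
            (\<Union>w\<in>{w \<in> l2_space. l2_inner w v = 0}. creation w ` l2_space)))
         = {\<xi> \<in> l2_space. l2_adjoint (creation v) \<xi> = (\<lambda>_. 0)}"
  using l2_closure_cspan_fock_generators[OF assms(2)] annihilation_kernel_eq_adjoint_kernel[OF assms(2)]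
  by (simp add: fock_generators_def)

end
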